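(* Let $r\ge4$ and $s\in\{2,\dots,r-1\}$, and let $A=\{a_1,\dots,a_s\}$ and $B=\{b_1,\dots,b_s\}$ be two different $s$-partitions of $r$. Then the graphs $\widehat K_r(A)$ and $\widehat K_r(B)$ are non-isomorphic, and they are isospectral both for the standard Laplacian and for the signless standard Laplacian.
   Context: An $s$-partition of $r\in\mathbb N$ is a multiset $\{a_1,\dots,a_s\}$ of positive integers with $a_1+\dots+a_s=r$. $\widehat K_r$ is the graph obtained from the complete graph $K_r$ (vertices $w_1,\dots,w_r$) by attaching a pendant vertex $v_i$ to each $w_i$ via an edge $\{w_i,v_i\}$. For an $s$-partition $A=\{a_1,\dots,a_s\}$ of $r$, $\widehat K_r(A)$ is the quotient graph obtained from $\widehat K_r$ by contracting (identifying) the vertex sets $\{v_1,\dots,v_{a_1}\}$, $\{v_{a_1+1},\dots,v_{a_1+a_2}\}$, …, $\{v_{a_1+\dots+a_{s-1}+1},\dots,v_r\}$ each into a single vertex, keeping all edges; thus $\widehat K_r(A)$ consists of $K_r$ together with $s$ further vertices, the $j$-th adjacent exactly to the $a_j$ vertices $w_i$ of the $j$-th block. The standard Laplacian is $(\Delta_G f)(v)=f(v)-\frac{1}{\deg v}\sum_{u\in N_v}f(u)$ and the signless standard Laplacian is $(\Delta_{G^+}f)(v)=f(v)+\frac{1}{\deg v}\sum_{u\in N_v}f(u)$ (equivalently $I\mp D^{-1/2}AD^{-1/2}$). Two graphs are isospectral for an operator if the operators have the same eigenvalues with multiplicities. *)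

theory Defs
  imports "HOL-Library.Multiset" "Jordan_Normal_Form.Char_Poly"
begin

definition graph_iso :: "'a set \<Rightarrow> ('a \<Rightarrow> 'a \<Rightarrow> bool) \<Rightarrow> 'b set \<Rightarrow> ('b \<Rightarrow> 'b \<Rightarrow> bool) \<Rightarrow> bool" where
  "graph_iso V E W F \<longleftrightarrow>
     (\<exists>f. bij_betw f V W \<and> (\<forall>u\<in>V. \<forall>v\<in>V. E u v \<longleftrightarrow> F (f u) (f v)))"

definition gdeg :: "nat \<Rightarrow> (nat \<Rightarrow> nat \<Rightarrow> bool) \<Rightarrow> nat \<Rightarrow> nat" where
  "gdeg n E v = card {u. u < n \<and> E v u}"

definition std_laplacian :: "nat \<Rightarrow> (nat \<Rightarrow> nat \<Rightarrow> bool) \<Rightarrow> real mat" where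
  "std_laplacian n E = mat n n (\<lambda>(v,u).
      (if v = u then 1 else 0) - (if E v u then 1 / real (gdeg n E v) else 0))"

definition signless_std_laplacian :: "nat \<Rightarrow> (nat \<Rightarrow> nat \<Rightarrow> bool) \<Rightarrow> real mat" where
  "signless_std_laplacian n E = mat n n (\<lambda>(v,u).
      (if v = u then 1 else 0) + (if E v u then 1 / real (gdeg n E v) else 0))"

(* Isospectral: same eigenvalues with (algebraic) multiplicities, i.e. equal characteristic
   polynomials. *)
definition isospectral :: "real mat \<Rightarrow> real mat \<Rightarrow> bool" where
  "isospectral M N \<longleftrightarrow> char_poly M = char_poly N"

definition is_partition :: "nat \<Rightarrow> nat \<Rightarrow> nat multiset \<Rightarrow> bool" where
  "is_partition s r A \<longleftrightarrow> size A = s \<and> (\<forall>a\<in>#A. 0 < a) \<and> sum_mset A = r"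

(* For a list of block sizes as = [a_1,...,a_s], vertex i < r (i.e. w_{i+1}) lies in block j < s
   iff a_1+...+a_j \<le> i < a_1+...+a_{j+1}. *)
definition in_block :: "nat list \<Rightarrow> nat \<Rightarrow> nat \<Rightarrow> bool" where
  "in_block as j i \<longleftrightarrow> j < length as \<and> sum_list (take j as) \<le> i \<and> i < sum_list (take (Suc j) as)"

(* Khat_r(A): vertices 0..r-1 are w_1..w_r (forming K_r), vertices r..r+s-1 are the s
   contracted vertices; vertex r+j is adjacent exactly to the w_i of the j-th block.
   The blocks are taken in the order of the sorted list of the multiset A. *)
definition Khat_adj :: "nat \<Rightarrow> nat multiset \<Rightarrow> nat \<Rightarrow> nat \<Rightarrow> bool" where
  "Khat_adj r A u v \<longleftrightarrow>
     (let as = sorted_list_of_multiset A in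
       (u < r \<and> v < r \<and> u \<noteq> v)
     \<or> (u < r \<and> r \<le> v \<and> in_block as (v - r) u)
     \<or> (v < r \<and> r \<le> u \<and> in_block as (u - r) v))"

definition Khat_card :: "nat \<Rightarrow> nat multiset \<Rightarrow> nat" where
  "Khat_card r A = r + size A"

end

theory Submission
  imports Defs
begin

text \<open>The random walk matrix \<open>N = D\<^sup>-\<^sup>1 Adj\<close> of the graph built from \<open>A\<close> has two invariant subspaces.
  On functions supported on the clique with zero sum over every block it acts as \<open>-1/r\<close>.
  On the \<open>2s\<close>-dimensional space of functions constant on the blocks and arbitrary on the
  contracted vertices, it sees the block sizes \<open>a\<^sub>j\<close> only through the linear form
  \<open>\<Sum> a\<^sub>j c\<^sub>j\<close>. Correcting the value on the first block so that this form becomes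
  \<open>\<Sum> b\<^sub>j c\<^sub>j\<close>, and identifying the two \<open>(r - s)\<close>-dimensional deviation spaces through a
  bijection between the clique vertices that are not block representatives, yields an
  invertible \<open>P\<close> with \<open>P N\<^sub>A = N\<^sub>B P\<close>; hence \<open>I \<mp> N\<^sub>A\<close> and \<open>I \<mp> N\<^sub>B\<close> are similar.
  The graphs are not isomorphic because the degree multiset of the graph built from \<open>A\<close> is
  \<open>r\<close> copies of \<open>r\<close> together with \<open>A\<close>.\<close>

section \<open>Blocks of a composition\<close>

lemma sum_list_take_mono:
  assumes "j \<le> k" shows "sum_list (take j xs) \<le> sum_list (take k (xs::nat list))"
proof -
  obtain d where "k = j + d" using assms by (metis le_add_diff_inverse)
  then show ?thesis by (simp add: take_add)
qed

lemma in_block_unique: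
  assumes "in_block as j u" "in_block as j' u" shows "j = j'"
proof -
  have False if "in_block as p u" "in_block as q u" "p < q" for p q
  proof -
    have "sum_list (take (Suc p) as) \<le> sum_list (take q as)"
      using \<open>p < q\<close> by (intro sum_list_take_mono) simp
    with that show False unfolding in_block_def by simp
  qed
  with assms show ?thesis by (metis linorder_neqE_nat)
qed

lemma in_block_exists: "u < sum_list as \<Longrightarrow> \<exists>j. in_block as j u"
proof (induction as arbitrary: u)
  case (Cons a as)
  show ?case
  proof (cases "u < a")
    case True
    then have "in_block (a # as) 0 u" unfolding in_block_def by simp
    then show ?thesis by blast
  next
    case False
    with Cons.prems have "u - a < sum_list as" by simp
    then obtain j where "in_block as j (u - a)" using Cons.IH by blast
    with False have "in_block (a # as) (Suc j) u" unfolding in_block_def by auto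
    then show ?thesis by blast
  qed
qed simp

definition block_of :: "nat list \<Rightarrow> nat \<Rightarrow> nat" where
  "block_of as u = (THE j. in_block as j u)"

lemma in_block_block_of: "u < sum_list as \<Longrightarrow> in_block as (block_of as u) u"
  unfolding block_of_def by (metis in_block_exists in_block_unique theI)

lemma block_of_eqI: "in_block as j u \<Longrightarrow> block_of as u = j"
  unfolding block_of_def by (metis in_block_unique the_equality)

lemma block_of_less: "u < sum_list as \<Longrightarrow> block_of as u < length as"
  using in_block_block_of unfolding in_block_def by blast

lemma in_block_iff_block_of:
  "u < sum_list as \<Longrightarrow> in_block as j u \<longleftrightarrow> j < length as \<and> block_of as u = j"
  using in_block_block_of block_of_eqI block_of_less by metis

lemma card_block_of_fibre:
  assumes "j < length as"
  shows "card {u. u < sum_list as \<and> block_of as u = j} = as ! j"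
proof -
  have "sum_list (take (Suc j) as) \<le> sum_list as"
    using sum_list_take_mono[of "Suc j" "length as" as] assms by simp
  have "{u. u < sum_list as \<and> block_of as u = j}
      = {sum_list (take j as) ..< sum_list (take (Suc j) as)}"
  proof (intro equalityI subsetI)
    fix u assume "u \<in> {u. u < sum_list as \<and> block_of as u = j}"
    then have "in_block as j u" using in_block_block_of by blast
    then show "u \<in> {sum_list (take j as) ..< sum_list (take (Suc j) as)}"
      unfolding in_block_def by simp
  next
    fix u assume "u \<in> {sum_list (take j as) ..< sum_list (take (Suc j) as)}"
    with assms \<open>sum_list (take (Suc j) as) \<le> sum_list as\<close> block_of_eqI[of as j u]
    show "u \<in> {u. u < sum_list as \<and> block_of as u = j}"
      unfolding in_block_def by auto
  qed
  then show ?thesis using assms by (simp add: take_Suc_conv_app_nth)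
qed

lemma partition_sorted_list:
  assumes "is_partition s r A"
  shows "length (sorted_list_of_multiset A) = s" "sum_list (sorted_list_of_multiset A) = r"
    "\<forall>x\<in>set (sorted_list_of_multiset A). 0 < x"
  using assms mset_sorted_list_of_multiset[of A] unfolding is_partition_def
  by (metis size_mset, metis sum_mset_sum_list, metis set_mset_mset)

section \<open>The graphs and their degrees\<close>

lemma graph_iso_degree_mset:
  assumes "graph_iso {..<n} E {..<n} F"
  shows "image_mset (gdeg n E) (mset_set {..<n}) = image_mset (gdeg n F) (mset_set {..<n})"
proof -
  obtain f where bij: "bij_betw f {..<n} {..<n}"
    and adj: "\<forall>u\<in>{..<n}. \<forall>v\<in>{..<n}. E u v \<longleftrightarrow> F (f u) (f v)"
    using assms unfolding graph_iso_def by blast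
  have inj: "inj_on f {..<n}" and onto: "f ` {..<n} = {..<n}"
    using bij by (auto simp: bij_betw_def)
  have nbrs: "{u. u < n \<and> F (f v) u} = f ` {u. u < n \<and> E v u}" if "v < n" for v
  proof (intro equalityI subsetI)
    fix u assume u: "u \<in> {u. u < n \<and> F (f v) u}"
    then have "u \<in> f ` {..<n}" using onto by simp
    then obtain w where w: "w < n" "u = f w" by auto
    then have "E v w" using adj u \<open>v < n\<close> by auto
    with w show "u \<in> f ` {u. u < n \<and> E v u}" by auto
  next
    fix u assume "u \<in> f ` {u. u < n \<and> E v u}"
    then show "u \<in> {u. u < n \<and> F (f v) u}" using adj \<open>v < n\<close> onto by auto
  qed
  have deg: "gdeg n F (f v) = gdeg n E v" if "v < n" for v
    unfolding gdeg_def nbrs[OF that] by (rule card_image, rule inj_on_subset[OF inj]) auto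
  have "image_mset (gdeg n E) (mset_set {..<n}) = image_mset (\<lambda>v. gdeg n F (f v)) (mset_set {..<n})"
    by (intro image_mset_cong) (simp add: deg)
  also have "\<dots> = image_mset (gdeg n F) (image_mset f (mset_set {..<n}))"
    by (simp add: multiset.map_comp comp_def)
  also have "image_mset f (mset_set {..<n}) = mset_set {..<n}"
    using image_mset_mset_set[OF inj] onto by simp
  finally show ?thesis .
qed

text \<open>\<open>Khat_adj\<close> with the partition abstracted to an arbitrary map \<open>g\<close> from the clique vertices
  to the contracted vertices (\<open>Khat_adj_eq_Khat_map_adj\<close>).\<close>

definition Khat_map_adj :: "nat \<Rightarrow> nat \<Rightarrow> (nat \<Rightarrow> nat) \<Rightarrow> nat \<Rightarrow> nat \<Rightarrow> bool" where
  "Khat_map_adj r s g v u \<longleftrightarrow> (v < r \<and> u < r \<and> v \<noteq> u)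
     \<or> (v < r \<and> r \<le> u \<and> u < r + s \<and> g v = u - r)
     \<or> (u < r \<and> r \<le> v \<and> v < r + s \<and> g u = v - r)"

lemma Khat_adj_eq_Khat_map_adj:
  assumes "as = sorted_list_of_multiset A" "sum_list as = r" "length as = s"
  shows "Khat_adj r A = Khat_map_adj r s (block_of as)"
proof (intro ext)
  fix u v
  have blocks: "u < r \<Longrightarrow> in_block as j u \<longleftrightarrow> j < s \<and> block_of as u = j" for u j
    using in_block_iff_block_of assms by metis
  show "Khat_adj r A u v = Khat_map_adj r s (block_of as) u v"
    unfolding Khat_adj_def Khat_map_adj_def Let_def assms(1)[symmetric]
    using blocks[of u "v - r"] blocks[of v "u - r"] by auto
qed

lemma gdeg_Khat_map_adj_clique:
  assumes "\<And>u. u < r \<Longrightarrow> g u < s" and "v < r"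
  shows "gdeg (r + s) (Khat_map_adj r s g) v = r"
proof -
  have "{u. u < r + s \<and> Khat_map_adj r s g v u} = insert (r + g v) ({..<r} - {v})"
    using assms unfolding Khat_map_adj_def by auto
  then show ?thesis using assms(2) by (simp add: gdeg_def)
qed

lemma gdeg_Khat_map_adj_hub:
  assumes "r \<le> v" "v < r + s"
  shows "gdeg (r + s) (Khat_map_adj r s g) v = card {u. u < r \<and> g u = v - r}"
proof -
  have "{u. u < r + s \<and> Khat_map_adj r s g v u} = {u. u < r \<and> g u = v - r}"
    using assms unfolding Khat_map_adj_def by auto
  then show ?thesis unfolding gdeg_def by simp
qed

lemma degree_mset_Khat_map_adj:
  assumes "length as = s" "sum_list as = r"
  shows "image_mset (gdeg (r + s) (Khat_map_adj r s (block_of as))) (mset_set {..<r + s})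
    = replicate_mset r r + mset as"
proof -
  let ?d = "gdeg (r + s) (Khat_map_adj r s (block_of as))"
  have "?d v = r" if "v < r" for v
    using gdeg_Khat_map_adj_clique[of r "block_of as" s v] block_of_less[of _ as] assms that
    by simp
  then have "image_mset ?d (mset_set {..<r}) = image_mset (\<lambda>_. r) (mset_set {..<r})"
    by (intro image_mset_cong) simp
  then have clique: "image_mset ?d (mset_set {..<r}) = replicate_mset r r"
    by (simp add: image_mset_const_eq)
  have "(+) r ` {..<s} = {r..<r + s}"
    using image_add_atLeastLessThan[of r 0 s] by (simp add: atLeast0LessThan add.commute)
  then have "mset_set {r..<r + s} = image_mset ((+) r) (mset_set {..<s})"
    by (simp add: image_mset_mset_set)
  then have "image_mset ?d (mset_set {r..<r + s}) = image_mset (\<lambda>j. ?d (r + j)) (mset_set {..<s})"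
    by (simp add: multiset.map_comp comp_def)
  also have "\<dots> = image_mset (\<lambda>j. as ! j) (mset_set {..<s})"
    using gdeg_Khat_map_adj_hub[of r _ s] card_block_of_fibre[of _ as] assms
    by (intro image_mset_cong) simp
  also have "\<dots> = mset (map (\<lambda>j. as ! j) [0..<s])"
    by (simp add: atLeast0LessThan)
  also have "\<dots> = mset as"
    using assms(1) map_nth[of as] by simp
  finally have hubs: "image_mset ?d (mset_set {r..<r + s}) = mset as" .
  have split: "{..<r + s} = {..<r} \<union> {r..<r + s}" by auto
  have "mset_set {..<r + s} = mset_set {..<r} + mset_set {r..<r + s}"
    unfolding split by (rule mset_set_Union) auto
  then show ?thesis by (simp add: clique hubs)
qed

lemma not_graph_iso_Khat_map_adj:
  assumes "length as = s" "sum_list as = r" "length bs = s" "sum_list bs = r"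
    and "mset as \<noteq> mset bs"
  shows "\<not> graph_iso {..<r + s} (Khat_map_adj r s (block_of as))
                     {..<r + s} (Khat_map_adj r s (block_of bs))"
proof
  assume "graph_iso {..<r + s} (Khat_map_adj r s (block_of as))
                     {..<r + s} (Khat_map_adj r s (block_of bs))"
  then have "replicate_mset r r + mset as = replicate_mset r r + mset bs"
    using degree_mset_Khat_map_adj[of as s r] degree_mset_Khat_map_adj[of bs s r] assms
    by (simp add: graph_iso_degree_mset)
  with assms(5) show False by simp
qed

section \<open>The random walk operator\<close>

definition mat_apply :: "nat \<Rightarrow> (nat \<times> nat \<Rightarrow> real) \<Rightarrow> (nat \<Rightarrow> real) \<Rightarrow> nat \<Rightarrow> real" where
  "mat_apply n f X i = (\<Sum>m<n. f (i, m) * X m)"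

definition delta :: "nat \<Rightarrow> nat \<Rightarrow> real" where
  "delta k m = (if m = k then 1 else 0)"

lemma sum_delta_mult:
  assumes "k < n" shows "(\<Sum>m<n. delta k m * X m) = X k"
proof -
  have "(\<Sum>m<n. delta k m * X m) = (\<Sum>m<n. if m = k then X k else 0)"
    by (rule sum.cong) (auto simp: delta_def)
  then show ?thesis using assms by simp
qed

lemma mat_apply_delta: "k < n \<Longrightarrow> mat_apply n f (delta k) i = f (i, k)"
  unfolding mat_apply_def using sum_delta_mult[of k n "\<lambda>m. f (i, m)"] by (simp add: mult.commute)

lemma mat_apply_cong: "(\<And>m. m < n \<Longrightarrow> X m = Y m) \<Longrightarrow> mat_apply n f X i = mat_apply n f Y i"
  unfolding mat_apply_def by (auto intro!: sum.cong)

lemma index_mat_mult_mat: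
  "i < n \<Longrightarrow> k < n \<Longrightarrow> (mat n n f * mat n n g) $$ (i, k) = mat_apply n f (\<lambda>m. g (m, k)) i"
  unfolding mat_apply_def by (simp add: scalar_prod_def atLeast0LessThan)

lemma sum_lessThan_add: "(\<Sum>m<r + (s::nat). h m) = (\<Sum>m<r. h m) + (\<Sum>j<s. h (r + j))"
  by (induction s) (auto simp: add.assoc)

definition walk :: "nat \<Rightarrow> nat \<Rightarrow> (nat \<Rightarrow> nat) \<Rightarrow> nat \<times> nat \<Rightarrow> real" where
  "walk r s g = (\<lambda>(v, u). if Khat_map_adj r s g v u
     then 1 / real (gdeg (r + s) (Khat_map_adj r s g) v) else 0)"

lemma laplacians_Khat_map_adj:
  "std_laplacian (r + s) (Khat_map_adj r s g) = 1\<^sub>m (r + s) - mat (r + s) (r + s) (walk r s g)"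
  "signless_std_laplacian (r + s) (Khat_map_adj r s g) = 1\<^sub>m (r + s) + mat (r + s) (r + s) (walk r s g)"
  unfolding std_laplacian_def signless_std_laplacian_def walk_def
  by (rule eq_matI; auto)+

definition fibre_avg :: "nat \<Rightarrow> (nat \<Rightarrow> nat) \<Rightarrow> (nat \<Rightarrow> real) \<Rightarrow> nat \<Rightarrow> real" where
  "fibre_avg r g X j = (\<Sum>u\<in>{u. u < r \<and> g u = j}. X u) / real (card {u. u < r \<and> g u = j})"

definition walk_step :: "nat \<Rightarrow> nat \<Rightarrow> (nat \<Rightarrow> nat) \<Rightarrow> (nat \<Rightarrow> real) \<Rightarrow> nat \<Rightarrow> real" where
  "walk_step r s g X v = (if v < r then ((\<Sum>u<r. X u) - X v + X (r + g v)) / real r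
     else fibre_avg r g X (v - r))"

lemma mat_apply_walk:
  assumes g: "\<And>u. u < r \<Longrightarrow> g u < s" and v: "v < r + s"
  shows "mat_apply (r + s) (walk r s g) X v = walk_step r s g X v"
proof -
  have split: "mat_apply (r + s) (walk r s g) X v
      = (\<Sum>m<r. walk r s g (v, m) * X m) + (\<Sum>j<s. walk r s g (v, r + j) * X (r + j))"
    unfolding mat_apply_def by (rule sum_lessThan_add)
  show ?thesis
  proof (cases "v < r")
    case True
    note deg = gdeg_Khat_map_adj_clique[of r g s v, OF g True]
    have "(\<Sum>m<r. walk r s g (v, m) * X m) = (\<Sum>m<r. if m = v then 0 else X m / real r)"
      by (rule sum.cong) (use True deg in \<open>auto simp: walk_def Khat_map_adj_def\<close>)
    also have "\<dots> = (\<Sum>m\<in>{..<r} - {v}. X m / real r)"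
      using True by (simp add: sum.If_cases Diff_eq)
    also have "\<dots> = ((\<Sum>m<r. X m) - X v) / real r"
      using True by (simp add: sum_diff1 sum_divide_distrib[symmetric] diff_divide_distrib)
    finally have clique: "(\<Sum>m<r. walk r s g (v, m) * X m) = ((\<Sum>m<r. X m) - X v) / real r" .
    have "(\<Sum>j<s. walk r s g (v, r + j) * X (r + j))
        = (\<Sum>j<s. if j = g v then X (r + g v) / real r else 0)"
      by (rule sum.cong) (use True deg in \<open>auto simp: walk_def Khat_map_adj_def\<close>)
    also have "\<dots> = X (r + g v) / real r" using g[OF True] by simp
    finally show ?thesis
      unfolding split clique walk_step_def using True by (simp add: add_divide_distrib)
  next
    case False
    let ?F = "{u. u < r \<and> g u = v - r}"
    have "(\<Sum>j<s. walk r s g (v, r + j) * X (r + j)) = 0"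
      by (rule sum.neutral) (use False in \<open>auto simp: walk_def Khat_map_adj_def\<close>)
    moreover have "(\<Sum>m<r. walk r s g (v, m) * X m)
        = (\<Sum>m<r. if g m = v - r then X m / real (card ?F) else 0)"
      by (rule sum.cong) (use False v gdeg_Khat_map_adj_hub[of r v s g] in
          \<open>auto simp: walk_def Khat_map_adj_def\<close>)
    moreover have "\<dots> = (\<Sum>m\<in>?F. X m / real (card ?F))"
      by (subst sum.inter_filter[symmetric]) (auto simp: lessThan_def)
    ultimately show ?thesis
      unfolding split walk_step_def fibre_avg_def using False by (simp add: sum_divide_distrib)
  qed
qed

lemma char_poly_eq_if_intertwined:
  fixes P X Y :: "'a :: field mat"
  assumes P: "P \<in> carrier_mat n n" and X: "X \<in> carrier_mat n n" and Y: "Y \<in> carrier_mat n n"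
    and "det P \<noteq> 0" and PXY: "P * X = Y * P"
  shows "char_poly X = char_poly Y"
proof -
  have "P \<in> Units (ring_mat TYPE('a) n ())" by (rule det_non_zero_imp_unit[OF P \<open>det P \<noteq> 0\<close>])
  then obtain Q where Q: "Q \<in> carrier_mat n n" and QP: "Q * P = 1\<^sub>m n" and PQ: "P * Q = 1\<^sub>m n"
    unfolding Units_def ring_mat_def by auto
  have "Y = Y * (P * Q)" using Y PQ by simp
  also have "\<dots> = (Y * P) * Q" using Y P Q by simp
  also have "\<dots> = P * X * Q" using PXY by simp
  finally have "similar_mat Y X"
    by (intro similar_matI[of Y X P Q n]) (use P Q X Y PQ QP in auto)
  then show ?thesis using char_poly_similar by metis
qed

lemma char_poly_one_pm_eq_if_intertwined:
  fixes P A B :: "'a :: field mat"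
  assumes c: "P \<in> carrier_mat n n" "A \<in> carrier_mat n n" "B \<in> carrier_mat n n"
    and "det P \<noteq> 0" and PAB: "P * A = B * P"
  shows "char_poly (1\<^sub>m n - A) = char_poly (1\<^sub>m n - B)"
    and "char_poly (1\<^sub>m n + A) = char_poly (1\<^sub>m n + B)"
proof -
  have "P * (1\<^sub>m n - A) = P * 1\<^sub>m n - P * A"
    by (rule mult_minus_distrib_mat[OF c(1) one_carrier_mat c(2)])
  also have "\<dots> = (1\<^sub>m n - B) * P"
    using c PAB by (simp add: minus_mult_distrib_mat[OF one_carrier_mat c(3) c(1)])
  finally have minus: "P * (1\<^sub>m n - A) = (1\<^sub>m n - B) * P" .
  show "char_poly (1\<^sub>m n - A) = char_poly (1\<^sub>m n - B)"
    by (rule char_poly_eq_if_intertwined[OF c(1) _ _ \<open>det P \<noteq> 0\<close> minus]) (use c in auto)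
  have "P * (1\<^sub>m n + A) = P * 1\<^sub>m n + P * A"
    by (rule mult_add_distrib_mat[OF c(1) one_carrier_mat c(2)])
  also have "\<dots> = (1\<^sub>m n + B) * P"
    using c PAB by (simp add: add_mult_distrib_mat[OF one_carrier_mat c(3) c(1)])
  finally have plus: "P * (1\<^sub>m n + A) = (1\<^sub>m n + B) * P" .
  show "char_poly (1\<^sub>m n + A) = char_poly (1\<^sub>m n + B)"
    by (rule char_poly_eq_if_intertwined[OF c(1) _ _ \<open>det P \<noteq> 0\<close> plus]) (use c in auto)
qed

locale block_map =
  fixes r s :: nat and \<alpha> :: "nat \<Rightarrow> nat"
  assumes block_less: "u < r \<Longrightarrow> \<alpha> u < s"
    and block_nonempty: "j < s \<Longrightarrow> \<exists>u<r. \<alpha> u = j"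
begin

abbreviation fibre :: "nat \<Rightarrow> nat set" where
  "fibre j \<equiv> {u. u < r \<and> \<alpha> u = j}"

definition bsize :: "nat \<Rightarrow> real" where
  "bsize j = real (card (fibre j))"

lemma bsize_pos: "j < s \<Longrightarrow> 0 < bsize j"
  using block_nonempty unfolding bsize_def by (auto simp: card_gt_0_iff)

lemma sum_by_fibres: "(\<Sum>k<r. h k) = (\<Sum>j<s. \<Sum>k\<in>fibre j. h k)"
proof -
  have "(\<Sum>j\<in>{..<s}. sum h {k \<in> {..<r}. \<alpha> k = j}) = sum h {..<r}"
    by (rule sum.group) (auto simp: block_less)
  then show ?thesis by simp
qed

lemma sum_bsize: "(\<Sum>j<s. bsize j) = real r"
  using sum_by_fibres[of "\<lambda>_. 1::real"] unfolding bsize_def by simp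

lemma fibre_avg_eq: "fibre_avg r \<alpha> X j = (\<Sum>u\<in>fibre j. X u) / bsize j"
  unfolding fibre_avg_def bsize_def by simp

lemma sum_bsize_fibre_avg: "(\<Sum>j<s. bsize j * fibre_avg r \<alpha> X j) = (\<Sum>u<r. X u)"
proof -
  have "(\<Sum>j<s. bsize j * fibre_avg r \<alpha> X j) = (\<Sum>j<s. \<Sum>u\<in>fibre j. X u)"
  proof (rule sum.cong)
    fix j assume "j \<in> {..<s}"
    then have "bsize j \<noteq> 0" using bsize_pos by fastforce
    then show "bsize j * fibre_avg r \<alpha> X j = (\<Sum>u\<in>fibre j. X u)" by (simp add: fibre_avg_eq)
  qed simp
  then show ?thesis using sum_by_fibres[of X] by simp
qed

definition rep :: "nat \<Rightarrow> nat" where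
  "rep j = (LEAST u. u < r \<and> \<alpha> u = j)"

lemma rep: "j < s \<Longrightarrow> rep j < r \<and> \<alpha> (rep j) = j"
  unfolding rep_def using block_nonempty by (metis (mono_tags, lifting) LeastI)

definition canon :: "nat \<Rightarrow> nat" where
  "canon m = rep (\<alpha> m)"

lemma canon: "m < r \<Longrightarrow> canon m < r \<and> \<alpha> (canon m) = \<alpha> m"
  unfolding canon_def using rep block_less by simp

definition nonreps :: "nat set" where
  "nonreps = {m. m < r \<and> m \<noteq> canon m}"

lemma finite_nonreps: "finite nonreps"
  unfolding nonreps_def by simp

lemma card_nonreps: "card nonreps = r - s"
proof -
  have inj: "inj_on rep {..<s}"
    by (rule inj_onI) (metis rep lessThan_iff)
  have sub: "rep ` {..<s} \<subseteq> {..<r}" using rep by auto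
  have "nonreps = {..<r} - rep ` {..<s}"
    unfolding nonreps_def canon_def using rep block_less by (auto simp: image_iff)
  then have "card nonreps = card {..<r} - card (rep ` {..<s})"
    using sub by (simp add: card_Diff_subset)
  then show ?thesis using card_image[OF inj] by simp
qed

lemma fibre_eq_insert_rep:
  assumes "j < s"
  shows "fibre j = insert (rep j) {k \<in> nonreps. \<alpha> k = j}" and "rep j \<notin> nonreps"
  using rep[OF assms] unfolding nonreps_def canon_def by auto

end

section \<open>An intertwiner for two block maps\<close>

locale block_pair = A: block_map r s \<alpha> + B: block_map r s \<beta>
  for r s :: nat and \<alpha> \<beta> :: "nat \<Rightarrow> nat" +
  assumes s_pos: "0 < s"
begin

abbreviation a :: "nat \<Rightarrow> real" where "a \<equiv> A.bsize"
abbreviation b :: "nat \<Rightarrow> real" where "b \<equiv> B.bsize"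

lemma sum_bsize_diff: "(\<Sum>j<s. a j - b j) = 0"
  using A.sum_bsize B.sum_bsize by (simp add: sum_subtractf)

text \<open>Only the value on the first block is corrected: constants are fixed, and
  \<open>\<Sum> a\<^sub>j c\<^sub>j\<close> becomes \<open>\<Sum> b\<^sub>j (reweight c)\<^sub>j\<close>.\<close>

definition reweight :: "(nat \<Rightarrow> real) \<Rightarrow> nat \<Rightarrow> real" where
  "reweight c j = c j + (if j = 0 then (\<Sum>j'<s. (a j' - b j') * c j') / b 0 else 0)"

lemma reweight_cong:
  "(\<And>j. j < s \<Longrightarrow> c j = c' j) \<Longrightarrow> j < s \<Longrightarrow> reweight c j = reweight c' j"
  unfolding reweight_def by (auto intro!: sum.cong)

lemma reweight_affine:
  "reweight (\<lambda>j. (p - c j + z j) / q) j = (p - reweight c j + reweight z j) / q"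
proof (cases "j = 0")
  case True
  define Sc where "Sc = (\<Sum>j<s. (a j - b j) * c j)"
  define Sz where "Sz = (\<Sum>j<s. (a j - b j) * z j)"
  have "(\<Sum>j<s. (a j - b j) * ((p - c j + z j) / q))
      = (\<Sum>j<s. p * (a j - b j) - (a j - b j) * c j + (a j - b j) * z j) / q"
    by (simp add: sum_divide_distrib algebra_simps)
  also have "\<dots> = ((\<Sum>j<s. p * (a j - b j)) - Sc + Sz) / q"
    unfolding Sc_def Sz_def by (simp add: sum.distrib sum_subtractf)
  also have "(\<Sum>j<s. p * (a j - b j)) = 0"
    using sum_bsize_diff by (simp add: sum_distrib_left[symmetric])
  finally have "(\<Sum>j<s. (a j - b j) * ((p - c j + z j) / q)) = (Sz - Sc) / q"
    by simp
  then have lhs: "reweight (\<lambda>j. (p - c j + z j) / q) j = (p - c 0 + z 0) / q + (Sz - Sc) / q / b 0"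
    unfolding reweight_def using True by simp
  have rhs: "reweight c j = c 0 + Sc / b 0" "reweight z j = z 0 + Sz / b 0"
    unfolding reweight_def Sc_def Sz_def using True by simp_all
  have "b 0 \<noteq> 0" using B.bsize_pos[OF s_pos] by simp
  then show ?thesis unfolding lhs rhs by (cases "q = 0") (simp_all add: field_simps)
qed (simp add: reweight_def)

lemma sum_bsize_reweight: "(\<Sum>j<s. b j * reweight c j) = (\<Sum>j<s. a j * c j)"
proof -
  define T where "T = (\<Sum>j'<s. (a j' - b j') * c j') / b 0"
  have "(\<Sum>j<s. b j * reweight c j) = (\<Sum>j<s. b j * c j + (if j = 0 then b 0 * T else 0))"
    by (rule sum.cong) (auto simp: reweight_def T_def[symmetric] distrib_left)
  also have "\<dots> = (\<Sum>j<s. b j * c j) + (\<Sum>j<s. if j = 0 then b 0 * T else 0)"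
    by (rule sum.distrib)
  also have "(\<Sum>j<s. if j = 0 then b 0 * T else 0) = (\<Sum>j<s. (a j - b j) * c j)"
    using s_pos B.bsize_pos[OF s_pos] unfolding T_def by simp
  finally show ?thesis by (simp add: sum_subtractf algebra_simps)
qed

lemma reweight_eq_zero:
  assumes "\<And>j. j < s \<Longrightarrow> reweight c j = 0" and "j < s"
  shows "c j = 0"
proof -
  have rest: "c j = 0" if "j < s" "j \<noteq> 0" for j
    using assms(1)[OF that(1)] that unfolding reweight_def by simp
  have "(\<Sum>j<s. (a j - b j) * c j) = (\<Sum>j<s. if j = 0 then (a 0 - b 0) * c 0 else 0)"
    by (rule sum.cong) (auto simp: rest)
  then have "reweight c 0 = c 0 * a 0 / b 0"
    using s_pos B.bsize_pos[OF s_pos] unfolding reweight_def by (simp add: field_simps)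
  then have "c 0 = 0" using assms(1)[OF s_pos] A.bsize_pos[OF s_pos] B.bsize_pos[OF s_pos] by simp
  then show ?thesis using rest[OF assms(2)] by (cases "j = 0") auto
qed

lemma sum_reweight_comp: "(\<Sum>u<r. reweight c (\<beta> u)) = (\<Sum>j<s. a j * c j)"
proof -
  have "(\<Sum>u<r. reweight c (\<beta> u)) = (\<Sum>j<s. b j * reweight c j)"
    unfolding B.sum_by_fibres[of "\<lambda>u. reweight c (\<beta> u)"] B.bsize_def by simp
  then show ?thesis using sum_bsize_reweight by simp
qed

definition nonrep_match :: "nat \<Rightarrow> nat" where
  "nonrep_match = (SOME g. bij_betw g B.nonreps A.nonreps)"

lemma bij_nonrep_match: "bij_betw nonrep_match B.nonreps A.nonreps"
proof -
  have "\<exists>g. bij_betw g B.nonreps A.nonreps"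
    by (rule finite_same_card_bij)
      (simp_all add: A.finite_nonreps B.finite_nonreps A.card_nonreps B.card_nonreps)
  then show ?thesis unfolding nonrep_match_def by (rule someI_ex)
qed

lemma nonrep_match_less: "i \<in> B.nonreps \<Longrightarrow> nonrep_match i < r"
  using bij_betwE[OF bij_nonrep_match] unfolding A.nonreps_def by blast

definition dev :: "(nat \<Rightarrow> real) \<Rightarrow> nat \<Rightarrow> real" where
  "dev X m = X m - X (A.canon m)"

text \<open>The deviations \<open>X m - X (canon m)\<close> at the non-representatives of \<open>\<alpha>\<close> are moved to the
  non-representatives of \<open>\<beta>\<close>; each \<open>\<beta>\<close>-representative takes minus their sum over its block,
  so that the result has zero sum on every \<open>\<beta>\<close>-block.\<close>

definition dev_transfer :: "(nat \<Rightarrow> real) \<Rightarrow> nat \<Rightarrow> real" where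
  "dev_transfer X i = (if i \<in> B.nonreps then dev X (nonrep_match i)
     else - (\<Sum>i'\<in>{i' \<in> B.nonreps. \<beta> i' = \<beta> i}. dev X (nonrep_match i')))"

definition intertwine :: "(nat \<Rightarrow> real) \<Rightarrow> nat \<Rightarrow> real" where
  "intertwine X i = (if i < r then reweight (fibre_avg r \<alpha> X) (\<beta> i) + dev_transfer X i
     else reweight (\<lambda>j. X (r + j)) (i - r))"

lemma sum_fibre_dev_transfer:
  assumes "j < s" shows "(\<Sum>k\<in>B.fibre j. dev_transfer X k) = 0"
proof -
  let ?N = "{k \<in> B.nonreps. \<beta> k = j}"
  have "finite ?N" using B.finite_nonreps by simp
  then have "(\<Sum>k\<in>B.fibre j. dev_transfer X k) = dev_transfer X (B.rep j) + (\<Sum>k\<in>?N. dev_transfer X k)"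
    using B.fibre_eq_insert_rep[OF assms] by simp
  also have "(\<Sum>k\<in>?N. dev_transfer X k) = (\<Sum>k\<in>?N. dev X (nonrep_match k))"
    by (rule sum.cong) (auto simp: dev_transfer_def)
  also have "dev_transfer X (B.rep j) = - (\<Sum>k\<in>?N. dev X (nonrep_match k))"
    using B.fibre_eq_insert_rep(2)[OF assms] B.rep[OF assms] unfolding dev_transfer_def by simp
  finally show ?thesis by simp
qed

lemma sum_dev_transfer: "(\<Sum>k<r. dev_transfer X k) = 0"
  using B.sum_by_fibres[of "dev_transfer X"] sum_fibre_dev_transfer by simp

lemma dev_walk_step: "m < r \<Longrightarrow> dev (walk_step r s \<alpha> X) m = - dev X m / real r"
  using A.canon[of m] unfolding dev_def walk_step_def by (simp add: field_simps)

lemma dev_transfer_walk_step: "dev_transfer (walk_step r s \<alpha> X) i = - dev_transfer X i / real r"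
proof (cases "i \<in> B.nonreps")
  case False
  let ?N = "{i' \<in> B.nonreps. \<beta> i' = \<beta> i}"
  have "(\<Sum>i'\<in>?N. dev (walk_step r s \<alpha> X) (nonrep_match i')) = (\<Sum>i'\<in>?N. - dev X (nonrep_match i') / real r)"
    by (rule sum.cong) (auto simp: dev_walk_step nonrep_match_less)
  then show ?thesis unfolding dev_transfer_def using False by (simp add: sum_divide_distrib sum_negf)
qed (simp add: dev_transfer_def dev_walk_step nonrep_match_less)

lemma fibre_avg_walk_step:
  assumes "j < s"
  shows "fibre_avg r \<alpha> (walk_step r s \<alpha> X) j = ((\<Sum>u<r. X u) - fibre_avg r \<alpha> X j + X (r + j)) / real r"
proof -
  define S where "S = (\<Sum>u<r. X u)"
  have "(\<Sum>u\<in>A.fibre j. walk_step r s \<alpha> X u) = (\<Sum>u\<in>A.fibre j. (S - X u + X (r + j)) / real r)"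
    by (rule sum.cong) (auto simp: walk_step_def S_def)
  also have "\<dots> = (a j * S - (\<Sum>u\<in>A.fibre j. X u) + a j * X (r + j)) / real r"
    by (simp add: sum_divide_distrib[symmetric] sum_subtractf sum.distrib A.bsize_def)
  finally show ?thesis
    using A.bsize_pos[OF assms] unfolding A.fibre_avg_eq S_def by (simp add: field_simps)
qed

lemma fibre_avg_intertwine:
  assumes "j < s"
  shows "fibre_avg r \<beta> (intertwine X) j = reweight (fibre_avg r \<alpha> X) j"
proof -
  have "(\<Sum>u\<in>B.fibre j. intertwine X u) = (\<Sum>u\<in>B.fibre j. reweight (fibre_avg r \<alpha> X) (\<beta> u) + dev_transfer X u)"
    by (rule sum.cong) (auto simp: intertwine_def)
  also have "\<dots> = b j * reweight (fibre_avg r \<alpha> X) j"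
    by (simp add: sum.distrib sum_fibre_dev_transfer[OF assms] B.bsize_def)
  finally show ?thesis using B.bsize_pos[OF assms] unfolding B.fibre_avg_eq by simp
qed

lemma sum_intertwine: "(\<Sum>u<r. intertwine X u) = (\<Sum>u<r. X u)"
proof -
  have "(\<Sum>u<r. intertwine X u) = (\<Sum>u<r. reweight (fibre_avg r \<alpha> X) (\<beta> u) + dev_transfer X u)"
    by (rule sum.cong) (simp_all add: intertwine_def)
  then show ?thesis
    by (simp add: sum.distrib sum_dev_transfer sum_reweight_comp A.sum_bsize_fibre_avg)
qed

lemma intertwine_walk_step:
  assumes "i < r + s"
  shows "intertwine (walk_step r s \<alpha> X) i = walk_step r s \<beta> (intertwine X) i"
proof (cases "i < r")
  case True
  define S where "S = (\<Sum>u<r. X u)"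
  define c where "c = fibre_avg r \<alpha> X"
  define z where "z = (\<lambda>j. X (r + j))"
  have i: "\<beta> i < s" using B.block_less True by simp
  have "reweight (fibre_avg r \<alpha> (walk_step r s \<alpha> X)) (\<beta> i) = reweight (\<lambda>j. (S - c j + z j) / real r) (\<beta> i)"
    by (rule reweight_cong[OF _ i]) (simp add: fibre_avg_walk_step S_def c_def z_def)
  then have lhs: "intertwine (walk_step r s \<alpha> X) i
      = (S - reweight c (\<beta> i) + reweight z (\<beta> i)) / real r - dev_transfer X i / real r"
    unfolding intertwine_def reweight_affine dev_transfer_walk_step using True by simp
  have rhs: "walk_step r s \<beta> (intertwine X) i
      = (S - (reweight c (\<beta> i) + dev_transfer X i) + reweight z (\<beta> i)) / real r"
    unfolding walk_step_def sum_intertwine using True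
    by (simp add: intertwine_def S_def c_def z_def)
  show ?thesis unfolding lhs rhs by (simp add: diff_divide_distrib add_divide_distrib)
next
  case False
  then have j: "i - r < s" using assms by simp
  have "intertwine (walk_step r s \<alpha> X) i = reweight (fibre_avg r \<alpha> X) (i - r)"
    unfolding intertwine_def using False by (auto simp: walk_step_def intro: reweight_cong[OF _ j])
  also have "\<dots> = walk_step r s \<beta> (intertwine X) i"
    unfolding walk_step_def using False fibre_avg_intertwine[OF j] by simp
  finally show ?thesis .
qed

lemma dev_transfer_eq_zero_imp_fibre_const:
  assumes "\<And>i. i < r \<Longrightarrow> dev_transfer X i = 0" and "m < r"
  shows "X m = X (A.canon m)"
proof (cases "m \<in> A.nonreps")
  case True
  then obtain i where i: "i \<in> B.nonreps" "nonrep_match i = m"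
    using bij_nonrep_match by (metis bij_betw_imp_surj_on imageE)
  then have "dev_transfer X i = 0" using assms(1) unfolding B.nonreps_def by simp
  then show ?thesis using i unfolding dev_transfer_def dev_def by simp
next
  case False
  then show ?thesis using assms(2) unfolding A.nonreps_def by simp
qed

lemma intertwine_eq_zero:
  assumes zero: "\<And>i. i < r + s \<Longrightarrow> intertwine X i = 0" and "i < r + s"
  shows "X i = 0"
proof -
  have "reweight (\<lambda>j. X (r + j)) j = 0" if "j < s" for j
    using zero[of "r + j"] that unfolding intertwine_def by simp
  then have hubs: "X (r + j) = 0" if "j < s" for j
    using reweight_eq_zero that by blast
  have reweight_avg: "reweight (fibre_avg r \<alpha> X) j = 0" if "j < s" for j
    using fibre_avg_intertwine[OF that, of X] zero unfolding B.fibre_avg_eq by simp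
  then have avg: "fibre_avg r \<alpha> X j = 0" if "j < s" for j
    using reweight_eq_zero that by blast
  from reweight_avg have "dev_transfer X i = 0" if "i < r" for i
    using zero[of i] that B.block_less[OF that] unfolding intertwine_def by simp
  then have const: "X m = X (A.canon m)" if "m < r" for m
    using dev_transfer_eq_zero_imp_fibre_const that by blast
  show ?thesis
  proof (cases "i < r")
    case True
    have "(\<Sum>u\<in>A.fibre (\<alpha> i). X u) = a (\<alpha> i) * X (A.canon i)"
      using const unfolding A.canon_def A.bsize_def by simp
    then have "fibre_avg r \<alpha> X (\<alpha> i) = X (A.canon i)"
      using A.bsize_pos[OF A.block_less[OF True]] unfolding A.fibre_avg_eq by simp
    then show ?thesis using avg[OF A.block_less[OF True]] const[OF True] by simp
  next
    case False
    then show ?thesis using hubs[of "i - r"] assms(2) by simp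
  qed
qed

definition reweight_entry :: "nat \<Rightarrow> nat \<Rightarrow> real" where
  "reweight_entry j j' = delta j j' + (if j = 0 then (a j' - b j') / b 0 else 0)"

definition dev_transfer_entry :: "nat \<Rightarrow> nat \<Rightarrow> real" where
  "dev_transfer_entry i k = (if i \<in> B.nonreps then delta (nonrep_match i) k - delta (A.canon (nonrep_match i)) k
     else - (\<Sum>i'\<in>{i' \<in> B.nonreps. \<beta> i' = \<beta> i}.
               delta (nonrep_match i') k - delta (A.canon (nonrep_match i')) k))"

definition intertwiner :: "nat \<times> nat \<Rightarrow> real" where
  "intertwiner = (\<lambda>(i, k).
     if i < r \<and> k < r then reweight_entry (\<beta> i) (\<alpha> k) / a (\<alpha> k) + dev_transfer_entry i k
     else if r \<le> i \<and> r \<le> k then reweight_entry (i - r) (k - r) else 0)"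

lemma sum_reweight_entry:
  assumes "j < s" shows "(\<Sum>j'<s. reweight_entry j j' * c j') = reweight c j"
proof -
  have "(\<Sum>j'<s. reweight_entry j j' * c j')
      = (\<Sum>j'<s. delta j j' * c j' + (if j = 0 then (a j' - b j') * c j' / b 0 else 0))"
    by (rule sum.cong) (auto simp: reweight_entry_def algebra_simps)
  then show ?thesis
    using assms by (simp add: sum.distrib sum_delta_mult sum_divide_distrib reweight_def)
qed

lemma sum_dev_transfer_entry: "(\<Sum>k<r. dev_transfer_entry i k * X k) = dev_transfer X i"
proof -
  have dev: "(\<Sum>k<r. (delta m k - delta (A.canon m) k) * X k) = dev X m" if "m \<in> A.nonreps" for m
    using that A.canon[of m] unfolding A.nonreps_def dev_def
    by (simp add: left_diff_distrib sum_subtractf sum_delta_mult)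
  show ?thesis
  proof (cases "i \<in> B.nonreps")
    case True
    then show ?thesis
      using dev bij_betwE[OF bij_nonrep_match] unfolding dev_transfer_entry_def dev_transfer_def by simp
  next
    case False
    let ?N = "{i' \<in> B.nonreps. \<beta> i' = \<beta> i}"
    have "(\<Sum>k<r. dev_transfer_entry i k * X k)
        = - (\<Sum>i'\<in>?N. \<Sum>k<r. (delta (nonrep_match i') k - delta (A.canon (nonrep_match i')) k) * X k)"
      unfolding dev_transfer_entry_def using False
      by (simp add: sum_distrib_right sum_negf sum.swap[of _ "{..<r}"])
    also have "\<dots> = - (\<Sum>i'\<in>?N. dev X (nonrep_match i'))"
      by (intro arg_cong[where f = uminus] sum.cong refl)
        (use dev bij_betwE[OF bij_nonrep_match] in auto)
    finally show ?thesis unfolding dev_transfer_def using False by simp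
  qed
qed

lemma sum_fibre_reweight_entry:
  assumes "j < s"
  shows "(\<Sum>k<r. reweight_entry j (\<alpha> k) / a (\<alpha> k) * X k) = reweight (fibre_avg r \<alpha> X) j"
proof -
  have "(\<Sum>k<r. reweight_entry j (\<alpha> k) / a (\<alpha> k) * X k)
      = (\<Sum>j'<s. \<Sum>k\<in>A.fibre j'. reweight_entry j j' / a j' * X k)"
    unfolding A.sum_by_fibres[of "\<lambda>k. reweight_entry j (\<alpha> k) / a (\<alpha> k) * X k"] by simp
  also have "\<dots> = (\<Sum>j'<s. reweight_entry j j' * fibre_avg r \<alpha> X j')"
    unfolding A.fibre_avg_eq by (simp add: sum_distrib_left sum_divide_distrib)
  finally show ?thesis using sum_reweight_entry[OF assms] by simp
qed

lemma mat_apply_intertwiner: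
  assumes "i < r + s"
  shows "mat_apply (r + s) intertwiner X i = intertwine X i"
proof -
  have split: "mat_apply (r + s) intertwiner X i
      = (\<Sum>k<r. intertwiner (i, k) * X k) + (\<Sum>j<s. intertwiner (i, r + j) * X (r + j))"
    unfolding mat_apply_def by (rule sum_lessThan_add)
  show ?thesis
  proof (cases "i < r")
    case True
    have "(\<Sum>j<s. intertwiner (i, r + j) * X (r + j)) = 0"
      using True by (simp add: intertwiner_def)
    moreover have "(\<Sum>k<r. intertwiner (i, k) * X k)
        = (\<Sum>k<r. reweight_entry (\<beta> i) (\<alpha> k) / a (\<alpha> k) * X k) + (\<Sum>k<r. dev_transfer_entry i k * X k)"
      using True by (simp add: intertwiner_def sum.distrib distrib_right)
    ultimately show ?thesis
      unfolding split intertwine_def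
      using True sum_fibre_reweight_entry[OF B.block_less[OF True]] sum_dev_transfer_entry by simp
  next
    case False
    then show ?thesis
      unfolding split intertwine_def using assms
      by (simp add: intertwiner_def sum_reweight_entry)
  qed
qed

lemma intertwiner_mult_walk:
  "mat (r + s) (r + s) intertwiner * mat (r + s) (r + s) (walk r s \<alpha>)
    = mat (r + s) (r + s) (walk r s \<beta>) * mat (r + s) (r + s) intertwiner"
proof (rule eq_matI)
  fix i k assume "i < dim_row (mat (r + s) (r + s) (walk r s \<beta>) * mat (r + s) (r + s) intertwiner)"
    and "k < dim_col (mat (r + s) (r + s) (walk r s \<beta>) * mat (r + s) (r + s) intertwiner)"
  then have i: "i < r + s" and k: "k < r + s" by auto
  have "(mat (r + s) (r + s) intertwiner * mat (r + s) (r + s) (walk r s \<alpha>)) $$ (i, k)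
      = mat_apply (r + s) intertwiner (walk_step r s \<alpha> (delta k)) i"
    unfolding index_mat_mult_mat[OF i k]
    by (rule mat_apply_cong) (simp add: mat_apply_delta[OF k, symmetric] mat_apply_walk A.block_less)
  also have "\<dots> = walk_step r s \<beta> (intertwine (delta k)) i"
    by (simp add: mat_apply_intertwiner[OF i] intertwine_walk_step[OF i])
  also have "\<dots> = mat_apply (r + s) (walk r s \<beta>) (intertwine (delta k)) i"
    by (rule mat_apply_walk[OF B.block_less i, symmetric])
  also have "\<dots> = (mat (r + s) (r + s) (walk r s \<beta>) * mat (r + s) (r + s) intertwiner) $$ (i, k)"
    unfolding index_mat_mult_mat[OF i k]
    by (rule mat_apply_cong) (simp add: mat_apply_delta[OF k, symmetric] mat_apply_intertwiner)
  finally show "(mat (r + s) (r + s) intertwiner * mat (r + s) (r + s) (walk r s \<alpha>)) $$ (i, k)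
      = (mat (r + s) (r + s) (walk r s \<beta>) * mat (r + s) (r + s) intertwiner) $$ (i, k)" .
qed auto

lemma det_intertwiner_neq_zero: "det (mat (r + s) (r + s) intertwiner) \<noteq> 0"
proof
  assume "det (mat (r + s) (r + s) intertwiner) = 0"
  then obtain v where v: "v \<in> carrier_vec (r + s)" "v \<noteq> 0\<^sub>v (r + s)"
    "mat (r + s) (r + s) intertwiner *\<^sub>v v = 0\<^sub>v (r + s)"
    using det_0_iff_vec_prod_zero_field[of "mat (r + s) (r + s) intertwiner" "r + s"] by auto
  have "intertwine (\<lambda>m. v $ m) i = 0" if "i < r + s" for i
  proof -
    have "(mat (r + s) (r + s) intertwiner *\<^sub>v v) $ i = mat_apply (r + s) intertwiner (\<lambda>m. v $ m) i"
      using that v(1) unfolding mat_apply_def by (simp add: scalar_prod_def atLeast0LessThan)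
    then show ?thesis using v(3) that mat_apply_intertwiner[OF that] by simp
  qed
  then have "v = 0\<^sub>v (r + s)"
    by (intro eq_vecI) (use v(1) intertwine_eq_zero in auto)
  with v(2) show False by simp
qed

theorem char_poly_walk_laplacians:
  "char_poly (1\<^sub>m (r + s) - mat (r + s) (r + s) (walk r s \<alpha>))
    = char_poly (1\<^sub>m (r + s) - mat (r + s) (r + s) (walk r s \<beta>))"
  "char_poly (1\<^sub>m (r + s) + mat (r + s) (r + s) (walk r s \<alpha>))
    = char_poly (1\<^sub>m (r + s) + mat (r + s) (r + s) (walk r s \<beta>))"
  by (rule char_poly_one_pm_eq_if_intertwined[OF mat_carrier mat_carrier mat_carrier
      det_intertwiner_neq_zero intertwiner_mult_walk])+

end

lemma block_map_block_of:
  assumes "length as = s" "sum_list as = r" "\<forall>x\<in>set as. 0 < x"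
  shows "block_map r s (block_of as)"
proof
  show "block_of as u < s" if "u < r" for u
    using block_of_less assms that by metis
  show "\<exists>u<r. block_of as u = j" if "j < s" for j
  proof -
    have "card {u. u < r \<and> block_of as u = j} \<noteq> 0"
      using card_block_of_fibre[of j as] assms that by simp
    then show ?thesis by (metis (mono_tags, lifting) Collect_empty_eq card.empty)
  qed
qed

theorem mainTheorem5:
  fixes r s :: nat and A B :: "nat multiset"
  assumes "r \<ge> 4" and "2 \<le> s" and "s \<le> r - 1"
    and "is_partition s r A" and "is_partition s r B" and "A \<noteq> B"
  shows "\<not> graph_iso {..<Khat_card r A} (Khat_adj r A) {..<Khat_card r B} (Khat_adj r B)
    \<and> isospectral (std_laplacian (Khat_card r A) (Khat_adj r A))
                   (std_laplacian (Khat_card r B) (Khat_adj r B))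
    \<and> isospectral (signless_std_laplacian (Khat_card r A) (Khat_adj r A))
                   (signless_std_laplacian (Khat_card r B) (Khat_adj r B))"
proof -
  define as bs where "as = sorted_list_of_multiset A" and "bs = sorted_list_of_multiset B"
  note as = partition_sorted_list[OF assms(4), folded as_def]
  note bs = partition_sorted_list[OF assms(5), folded bs_def]
  have card: "Khat_card r A = r + s" "Khat_card r B = r + s"
    using assms(4,5) unfolding Khat_card_def is_partition_def by simp_all
  have adj: "Khat_adj r A = Khat_map_adj r s (block_of as)" "Khat_adj r B = Khat_map_adj r s (block_of bs)"
    using Khat_adj_eq_Khat_map_adj as bs as_def bs_def by simp_all
  interpret block_pair r s "block_of as" "block_of bs"
    using block_map_block_of[OF as] block_map_block_of[OF bs] assms(2)
    by (simp add: block_pair_def block_pair_axioms_def)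
  have "mset as \<noteq> mset bs" using assms(6) unfolding as_def bs_def by simp
  then show ?thesis
    unfolding card adj isospectral_def laplacians_Khat_map_adj
    using not_graph_iso_Khat_map_adj as bs char_poly_walk_laplacians by simp
qed

end
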